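(* Let $q$ be an odd prime power, $n\ge3$ an odd integer and $s$ an integer with $\gcd(s,2n)=1$. Let $\gamma\in\mathbb{F}_{q^{2n}}$ be such that $\mathrm{N}_{q^{2n}/q}(\gamma)$ is a non-square in $\mathbb{F}_q$. Then $$\tilde{\mathcal{H}}_s=\Big\{bx^{q^{2s\frac{n+1}{2}}}+a\gamma x^{q^{2s\frac{n-1}{2}}}+(a\gamma)^{q^{s(n+2)}}x^{q^{2s\frac{n+3}{2}}}+\sum_{i=1}^{\frac{n-3}{2}}\Big(c_ix^{q^{2si}}+c_i^{q^{s(2n-2i+1)}}x^{q^{2s(n-i+1)}}\Big): a,b\in\mathbb{F}_{q^n},\ c_i\in\mathbb{F}_{q^{2n}}\Big\}$$ is a maximum Hermitian $\mathbb{F}_q$-linear $2$-code; that is, it is an $\mathbb{F}_q$-linear set of size $q^{n(n-1)}$ every nonzero element of which has rank at least $2$.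
   Context: Polynomials are linearized polynomials over $\mathbb{F}_{q^{2n}}$ taken modulo $x^{q^{2n}}-x$, regarded as $\mathbb{F}_{q^2}$-linear maps $\mathbb{F}_{q^{2n}}\to\mathbb{F}_{q^{2n}}$; the rank of such $f$ is the $\mathbb{F}_{q^2}$-dimension of its image. $\mathrm{N}_{q^{2n}/q}(x)=x^{(q^{2n}-1)/(q-1)}$. For an additive Hermitian $2$-code the size is at most $q^{n(n-1)}$, so size $q^{n(n-1)}$ is maximum. *)

theory Defs
  imports "HOL-Computational_Algebra.Primes" "HOL-Library.Cardinality"
begin

text \<open>The ambient field is a finite field of type 'a with CARD('a) = q^(2n).
  A linearized monomial x^(q^k) with integer k is the map x \<mapsto> x^(q^(k mod 2n));
  this is the same map on F_(q^(2n)) (and matches reduction modulo x^(q^(2n)) - x).\<close>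

definition frob :: "nat \<Rightarrow> nat \<Rightarrow> int \<Rightarrow> 'a::field \<Rightarrow> 'a" where
  "frob q n k x = x ^ (q ^ nat (k mod (2 * int n)))"

definition subfield_el :: "nat \<Rightarrow> 'a::field set" where
  "subfield_el Q = {x. x ^ Q = x}"

definition normq :: "nat \<Rightarrow> nat \<Rightarrow> 'a::field \<Rightarrow> 'a" where
  "normq q n x = x ^ ((q ^ (2 * n) - 1) div (q - 1))"

definition lin_indep_over :: "'a::field set \<Rightarrow> 'a set \<Rightarrow> bool" where
  "lin_indep_over K S \<longleftrightarrow> finite S \<and>
     (\<forall>c. (\<forall>v\<in>S. c v \<in> K) \<longrightarrow> (\<Sum>v\<in>S. c v * v) = 0 \<longrightarrow> (\<forall>v\<in>S. c v = 0))"

definition dim_over :: "'a::field set \<Rightarrow> 'a set \<Rightarrow> nat" where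
  "dim_over K V = Max {card S | S. S \<subseteq> V \<and> lin_indep_over K S}"

definition hrank :: "nat \<Rightarrow> ('a::{field,finite} \<Rightarrow> 'a) \<Rightarrow> nat" where
  "hrank q f = dim_over (subfield_el (q^2)) (range f)"

definition Htilde :: "nat \<Rightarrow> nat \<Rightarrow> int \<Rightarrow> 'a::{field,finite} \<Rightarrow> ('a \<Rightarrow> 'a) set" where
  "Htilde q n s \<gamma> =
    {(\<lambda>x. b * frob q n (2 * s * ((int n + 1) div 2)) x
        + a * \<gamma> * frob q n (2 * s * ((int n - 1) div 2)) x
        + frob q n (s * (int n + 2)) (a * \<gamma>) * frob q n (2 * s * ((int n + 3) div 2)) x
        + (\<Sum>i\<in>{1..(n - 3) div 2}.
             c i * frob q n (2 * s * int i) x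
           + frob q n (s * (2 * int n - 2 * int i + 1)) (c i)
               * frob q n (2 * s * (int n - int i + 1)) x))
     | a b c. a \<in> subfield_el (q ^ n) \<and> b \<in> subfield_el (q ^ n)}"

end

theory Submission
  imports Defs "HOL-Number_Theory.Residues" "HOL-Computational_Algebra.Polynomial"
begin

text \<open>Write an element of the code as a linearized polynomial with terms
  \<alpha>_j x^(q^(2sj)), j = 1..n. Since gcd(s, 2n) = 1 the exponents 2sj mod 2n are pairwise
  distinct and even, and a linearized polynomial of q-degree below 2n is determined by the map it
  induces; this gives the size of the code. If a nonzero element f had rank at most 1, then
  f / f(x0) would be F_(q^2)-valued, hence fixed by x \<mapsto> x^(q^2); comparing coefficients, the
  coefficient at exponent e + 2 is the q^2-th power of the one at e, so all \<alpha>_j have the same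
  norm N over F_q. In particular N(a) N(\<gamma>) = N(b). Norms of elements of F_(q^n) are squares
  in F_q and N(\<gamma>) is not, so a = 0; then every \<alpha>_j has norm 0 and f = 0.\<close>

section \<open>Finite fields and the norm\<close>

(* The library's finite_field_power_card_eq_same needs the sort finite_field, which a type of
   sort {field,finite} does not have. *)
lemma power_card_eq_self:
  fixes x :: "'a::{field,finite}"
  shows "x ^ CARD('a) = x"
proof (cases "x = 0")
  case False
  let ?U = "UNIV - {0::'a}"
  have "bij_betw ((*) x) ?U ?U"
    using False by (intro bij_betwI[where g = "\<lambda>y. y / x"]) auto
  hence "(\<Prod>y\<in>?U. x * y) = \<Prod>?U"
    by (rule prod.reindex_bij_betw)
  hence "x ^ card ?U * \<Prod>?U = 1 * \<Prod>?U"
    by (simp add: prod.distrib)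
  hence "x ^ card ?U = 1"
    by (subst (asm) mult_cancel_right) simp
  moreover have "CARD('a) = Suc (card ?U)"
    using finite_UNIV_card_ge_0[where 'a = 'a] by (simp add: card_Diff_singleton)
  ultimately show ?thesis
    by (metis power_Suc mult_1_right)
qed simp

lemma CHAR_eq_of_card_eq_prime_power:
  assumes "prime p" "0 < k" "CARD('a::{field,finite}) = p ^ k"
  shows "CHAR('a) = p"
proof -
  have "prime CHAR('a)"
    by (intro prime_CHAR_semidom finite_imp_CHAR_pos) simp
  moreover have "CHAR('a) dvd p ^ k"
    using CHAR_dvd_CARD[where 'a = 'a] assms(3) by simp
  ultimately show ?thesis
    using assms(1) by (metis prime_dvd_power primes_dvd_imp_eq)
qed

lemma power_minus_1_eq_geometric_sum:
  fixes q :: nat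
  assumes "1 \<le> q"
  shows "q ^ k - 1 = (q - 1) * (\<Sum>i<k. q ^ i)"
proof -
  have "int (q ^ k - 1) = int (q - 1) * int (\<Sum>i<k. q ^ i)"
    using power_diff_1_eq[of "int q" k] assms by (simp add: of_nat_diff)
  thus ?thesis
    by (simp only: of_nat_mult[symmetric] of_nat_eq_iff)
qed

lemma geometric_sum_double:
  fixes q :: nat
  assumes "1 < q"
  shows "(\<Sum>i<2 * k. q ^ i) = (\<Sum>i<k. q ^ i) * (q ^ k + 1)"
proof -
  define Q where "Q = int q"
  have "(Q - 1) * (\<Sum>i<2 * k. Q ^ i) = (Q ^ k) ^ 2 - 1"
    using power_diff_1_eq[of Q "2 * k"] by (simp add: power_mult[symmetric] mult.commute)
  also have "\<dots> = (Q ^ k - 1) * (Q ^ k + 1)"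
    by (simp add: power2_eq_square algebra_simps)
  also have "\<dots> = (Q - 1) * ((\<Sum>i<k. Q ^ i) * (Q ^ k + 1))"
    by (simp add: power_diff_1_eq[of Q k])
  finally have "(\<Sum>i<2 * k. Q ^ i) = (\<Sum>i<k. Q ^ i) * (Q ^ k + 1)"
    using assms by (simp add: Q_def)
  hence "int (\<Sum>i<2 * k. q ^ i) = int ((\<Sum>i<k. q ^ i) * (q ^ k + 1))"
    by (simp add: Q_def of_nat_sum algebra_simps)
  thus ?thesis
    by (simp only: of_nat_eq_iff)
qed

lemma normq_eq_power_geometric_sum:
  assumes "1 < q"
  shows "normq q n x = x ^ (\<Sum>i<2 * n. q ^ i)"
proof -
  have "q ^ (2 * n) - 1 = (q - 1) * (\<Sum>i<2 * n. q ^ i)"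
    using assms by (intro power_minus_1_eq_geometric_sum) simp
  thus ?thesis
    using assms unfolding normq_def by simp
qed

lemma power_geometric_sum_fixed:
  fixes z :: "'a::field"
  assumes "1 < q" "z ^ (q ^ k) = z"
  shows "(z ^ (\<Sum>i<k. q ^ i)) ^ q = z ^ (\<Sum>i<k. q ^ i)"
proof (cases "z = 0")
  case False
  have "q ^ k - 1 = (q - 1) * (\<Sum>i<k. q ^ i)" "0 < q ^ k"
    using assms(1) power_minus_1_eq_geometric_sum[of q k] by simp_all
  moreover have "(\<Sum>i<k. q ^ i) * q = (q - 1) * (\<Sum>i<k. q ^ i) + (\<Sum>i<k. q ^ i)"
    using assms(1) by (cases q) simp_all
  ultimately have "(\<Sum>i<k. q ^ i) * q + 1 = (\<Sum>i<k. q ^ i) + q ^ k"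
    by linarith
  hence "(z ^ (\<Sum>i<k. q ^ i)) ^ q * z = z ^ (\<Sum>i<k. q ^ i) * z ^ (q ^ k)"
    by (metis power_add power_mult power_one_right)
  thus ?thesis
    using False assms(2) by simp
qed (use assms(1) in \<open>simp add: power_0_left\<close>)

lemma power_power_eq_self: "(y::'a::monoid_mult) ^ q = y \<Longrightarrow> y ^ (q ^ k) = y"
  by (induction k) (simp_all add: power_mult)

lemma normq_mult: "normq q n (x * y) = normq q n x * normq q n (y::'a::field)"
  unfolding normq_def by (rule power_mult_distrib)

lemma subfield_el_divide:
  "x \<in> subfield_el Q \<Longrightarrow> y \<in> subfield_el Q \<Longrightarrow> x / y \<in> subfield_el Q"
  unfolding subfield_el_def by (simp add: power_divide)

lemma subfield_el_scale:
  "(t::'a::field) ^ q = t \<Longrightarrow> x \<in> subfield_el (q ^ k) \<Longrightarrow> t * x \<in> subfield_el (q ^ k)"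
  unfolding subfield_el_def by (simp add: power_mult_distrib power_power_eq_self)

lemma card_le_hrank:
  fixes f :: "'a::{field,finite} \<Rightarrow> 'a"
  assumes "S \<subseteq> range f" "lin_indep_over (subfield_el (q ^ 2)) S"
  shows "card S \<le> hrank q f"
  unfolding hrank_def dim_over_def
proof (rule Max_ge)
  show "finite {card S | S. S \<subseteq> range f \<and> lin_indep_over (subfield_el (q ^ 2)) S}"
    by (rule finite_subset[of _ "card ` Pow UNIV"]) auto
qed (use assms in blast)

lemma card_le_card_range_mult_card_kernel:
  fixes D :: "'a::{ab_group_add,finite} \<Rightarrow> 'b::ab_group_add"
  assumes D_diff: "\<And>x y. D (x - y) = D x - D y"
  shows "CARD('a) \<le> card (range D) * card {x. D x = 0}"
proof -
  have fibre: "card (D -` {D x0}) \<le> card {x. D x = 0}" for x0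
  proof -
    have "D -` {D x0} \<subseteq> (+) x0 ` {x. D x = 0}"
    proof
      fix x assume "x \<in> D -` {D x0}"
      hence "D (x - x0) = 0"
        by (simp add: D_diff)
      thus "x \<in> (+) x0 ` {x. D x = 0}"
        by (intro image_eqI[of _ _ "x - x0"]) simp_all
    qed
    thus ?thesis
      by (metis card_image_le card_mono finite finite_imageI order_trans)
  qed
  have "(\<Union>y\<in>range D. D -` {y}) = UNIV"
    by auto
  hence "CARD('a) = card (\<Union>y\<in>range D. D -` {y})"
    by simp
  also have "\<dots> \<le> (\<Sum>y\<in>range D. card (D -` {y}))"
    by (rule card_UN_le) simp
  also have "\<dots> \<le> card (range D) * card {x. D x = 0}"
    using sum_bounded_above[of "range D" "\<lambda>y. card (D -` {y})"] fibre by auto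
  finally show ?thesis .
qed

lemma card_roots_binomial_le:
  assumes "2 \<le> N"
  shows "card {x::'a::idom. x ^ N = c * x} \<le> N"
proof -
  define p where "p = monom (1::'a) N - [:0, c:]"
  have "coeff p N = 1"
    unfolding p_def using assms by (simp add: coeff_pCons split: nat.split)
  hence "p \<noteq> 0"
    by auto
  moreover have "degree p \<le> N"
    unfolding p_def using assms by (intro degree_diff_le) (simp_all add: degree_monom_le)
  moreover have "{x. x ^ N = c * x} = {x. poly p x = 0}"
    by (simp add: p_def poly_monom mult.commute)
  ultimately show ?thesis
    using card_poly_roots_bound[of p] by simp
qed

section \<open>Linearized polynomials and rank\<close>

definition lin_poly :: "nat \<Rightarrow> nat \<Rightarrow> (nat \<Rightarrow> 'a::field) \<Rightarrow> 'a \<Rightarrow> 'a" where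
  "lin_poly q n \<beta> x = (\<Sum>e<2 * n. \<beta> e * x ^ (q ^ e))"

locale frobenius_field =
  fixes q n :: nat
  assumes q_gt1: "1 < q" and n_pos: "0 < n"
    and card_field: "CARD('a::{field,finite}) = q ^ (2 * n)"
    and power_q_add: "((x::'a) + y) ^ q = x ^ q + y ^ q"
begin

lemma power_q_power_add: "((x::'a) + y) ^ (q ^ j) = x ^ (q ^ j) + y ^ (q ^ j)"
  by (induction j arbitrary: x y) (simp_all add: power_mult power_q_add)

lemma power_q_power_sum: "(\<Sum>i\<in>A. f i :: 'a) ^ (q ^ j) = (\<Sum>i\<in>A. f i ^ (q ^ j))"
  by (induction A rule: infinite_finite_induct) (use q_gt1 in \<open>simp_all add: power_q_power_add\<close>)

lemma power_q_power_minus: "(- (x::'a)) ^ (q ^ j) = - (x ^ (q ^ j))"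
  using power_q_power_add[of x "- x" j] q_gt1 by (simp add: eq_neg_iff_add_eq_0 add.commute power_0_left)

lemma power_q_power_diff: "((x::'a) - y) ^ (q ^ j) = x ^ (q ^ j) - y ^ (q ^ j)"
  using power_q_power_add[of x "- y" j] by (simp add: power_q_power_minus)

lemma power_q_2n_eq_self: "(x::'a) ^ (q ^ (2 * n)) = x"
  using power_card_eq_self[of x] card_field by simp

lemma power_q_power_mod: "(x::'a) ^ (q ^ k) = x ^ (q ^ (k mod (2 * n)))"
proof -
  have "x ^ (q ^ (2 * n * d)) = x" for d
    using power_power_eq_self[OF power_q_2n_eq_self, where k = d] by (simp only: power_mult)
  moreover have "q ^ k = q ^ (2 * n * (k div (2 * n))) * q ^ (k mod (2 * n))"
    by (simp flip: power_add)
  ultimately show ?thesis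
    by (simp add: power_mult)
qed

lemma subfield_el_add:
  "x \<in> subfield_el (q ^ j) \<Longrightarrow> y \<in> subfield_el (q ^ j) \<Longrightarrow> (x::'a) + y \<in> subfield_el (q ^ j)"
  unfolding subfield_el_def by (simp add: power_q_power_add)

lemma subfield_el_uminus: "x \<in> subfield_el (q ^ j) \<Longrightarrow> - (x::'a) \<in> subfield_el (q ^ j)"
  unfolding subfield_el_def by (simp add: power_q_power_minus)

lemma card_subfield_el: "card (subfield_el (q ^ n) :: 'a set) = q ^ n"
proof -
  define D where "D x = x ^ (q ^ n) - x" for x :: 'a
  have K: "subfield_el (q ^ n) = {x. D x = 0}"
    by (simp add: subfield_el_def D_def)
  have qn: "2 \<le> q ^ n"
    using q_gt1 n_pos by (metis Suc_1 Suc_leI one_less_power)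
  have "range D \<subseteq> {y. y ^ (q ^ n) = -1 * y}"
  proof clarify
    fix x :: 'a
    have "x ^ (q ^ n * q ^ n) = x"
      using power_q_2n_eq_self[of x] by (simp add: mult_2 power_add)
    thus "D x ^ (q ^ n) = -1 * D x"
      by (simp add: D_def power_q_power_diff power_mult[symmetric])
  qed
  hence "card (range D) \<le> q ^ n"
    using order_trans[OF card_mono[OF finite] card_roots_binomial_le[OF qn]] by blast
  moreover have "D (x - y) = D x - D y" for x y
    by (simp add: D_def power_q_power_diff)
  hence "CARD('a) \<le> card (range D) * card {x. D x = 0}"
    by (rule card_le_card_range_mult_card_kernel)
  ultimately have "q ^ n * q ^ n \<le> q ^ n * card {x. D x = 0}"
    using card_field by (metis mult_2 mult_le_mono1 order_trans power_add)
  hence "q ^ n \<le> card {x. D x = 0}"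
    using q_gt1 by simp
  moreover have "card {x. D x = 0} \<le> q ^ n"
    using card_roots_binomial_le[OF qn, of 1] by (simp add: D_def)
  ultimately show ?thesis
    unfolding K by simp
qed

lemma lin_poly_coeff_unique:
  assumes "\<And>x. lin_poly q n \<beta> (x::'a) = lin_poly q n \<beta>' x" "e < 2 * n"
  shows "\<beta> e = \<beta>' e"
proof -
  define p where "p = (\<Sum>e<2 * n. monom (\<beta> e - \<beta>' e) (q ^ e))"
  have coeff_p: "coeff p (q ^ e) = \<beta> e - \<beta>' e" if "e < 2 * n" for e
    using that q_gt1 by (simp add: p_def coeff_sum)
  have "p = 0"
  proof (rule ccontr)
    assume "p \<noteq> 0"
    have "poly p x = 0" for x
      using assms(1)[of x]
      by (simp add: p_def poly_sum poly_monom lin_poly_def sum_subtractf left_diff_distrib)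
    hence "q ^ (2 * n) \<le> degree p"
      using card_poly_roots_bound[OF \<open>p \<noteq> 0\<close>] card_field by simp
    also have "degree p \<le> q ^ (2 * n - 1)"
      unfolding p_def using q_gt1
      by (intro degree_sum_le order_trans[OF degree_monom_le] power_increasing) auto
    also have "\<dots> < q ^ (2 * n)"
      using q_gt1 n_pos by (intro power_strict_increasing) auto
    finally show False
      by simp
  qed
  thus ?thesis
    using coeff_p[OF assms(2)] by simp
qed

lemma lin_poly_fixed_coeff_step:
  assumes fixed: "\<And>x::'a. lin_poly q n \<beta> x ^ (q ^ 2) = lin_poly q n \<beta> x" and "e < 2 * n"
  shows "\<beta> ((e + 2) mod (2 * n)) = \<beta> e ^ (q ^ 2)"
proof -
  define r where "r e = (e + 2) mod (2 * n)" for e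
  define r' where "r' e = (e + (2 * n - 2)) mod (2 * n)" for e
  have r'_r: "r' (r e) = e" and r_r': "r (r' e) = e" if "e < 2 * n" for e
  proof -
    have "e + 2 + (2 * n - 2) = e + 2 * n" "e + (2 * n - 2) + 2 = e + 2 * n"
      using n_pos by linarith+
    hence "r' (r e) = (e + 2 * n) mod (2 * n)" "r (r' e) = (e + 2 * n) mod (2 * n)"
      unfolding r_def r'_def by (metis mod_add_left_eq)+
    thus "r' (r e) = e" "r (r' e) = e"
      using that by simp_all
  qed
  have "lin_poly q n \<beta> x ^ (q ^ 2) = (\<Sum>e<2 * n. \<beta> e ^ (q ^ 2) * x ^ (q ^ r e))" for x :: 'a
  proof -
    have "(x ^ (q ^ e)) ^ (q ^ 2) = x ^ (q ^ r e)" for e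
    proof -
      have "(x ^ (q ^ e)) ^ (q ^ 2) = x ^ (q ^ (e + 2))"
        by (simp only: power_add power_mult)
      also have "\<dots> = x ^ (q ^ r e)"
        unfolding r_def by (rule power_q_power_mod)
      finally show ?thesis .
    qed
    thus ?thesis
      by (simp only: lin_poly_def power_q_power_sum power_mult_distrib)
  qed
  also have "\<dots> x = lin_poly q n (\<lambda>e. \<beta> (r' e) ^ (q ^ 2)) x" for x
    unfolding lin_poly_def
    by (rule sum.reindex_bij_witness[of _ r' r]) (use r'_r r_r' n_pos in \<open>auto simp: r_def r'_def\<close>)
  finally have "\<beta> e' = \<beta> (r' e') ^ (q ^ 2)" if "e' < 2 * n" for e'
    using lin_poly_coeff_unique[OF _ that] fixed by metis
  thus ?thesis
    using r'_r[OF assms(2)] n_pos by (simp add: r_def)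
qed

lemma lin_poly_fixed_coeff_shift:
  assumes "\<And>x::'a. lin_poly q n \<beta> x ^ (q ^ 2) = lin_poly q n \<beta> x" "e < 2 * n"
  shows "\<beta> ((e + 2 * t) mod (2 * n)) = \<beta> e ^ (q ^ (2 * t))"
proof (induction t)
  case (Suc t)
  have "(e + 2 * Suc t) mod (2 * n) = ((e + 2 * t) mod (2 * n) + 2) mod (2 * n)"
    unfolding mod_add_left_eq by (simp add: algebra_simps)
  hence "\<beta> ((e + 2 * Suc t) mod (2 * n)) = \<beta> ((e + 2 * t) mod (2 * n)) ^ (q ^ 2)"
    using lin_poly_fixed_coeff_step[OF assms(1)] n_pos by simp
  also have "\<dots> = \<beta> e ^ (q ^ (2 * t) * q ^ 2)"
    by (simp only: Suc.IH power_mult)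
  also have "\<dots> = \<beta> e ^ (q ^ (2 * Suc t))"
    by (simp flip: power_add)
  finally show ?case .
qed (use assms(2) in simp)

lemma lin_poly_fixed_coeff_even:
  assumes "\<And>x::'a. lin_poly q n \<beta> x ^ (q ^ 2) = lin_poly q n \<beta> x"
    and "even e" "even e'" "e < 2 * n" "e' < 2 * n"
  obtains t where "\<beta> e' = \<beta> e ^ (q ^ (2 * t))"
proof -
  obtain t where "e' + 2 * n - e = 2 * t"
    using assms(2,3) by (metis dvd_diff_nat dvd_add dvd_triv_left evenE)
  hence "e + 2 * t = e' + 2 * n"
    using assms(4) by linarith
  hence "(e + 2 * t) mod (2 * n) = e'"
    using assms(5) by simp
  thus ?thesis
    using that lin_poly_fixed_coeff_shift[OF assms(1,4)] by metis
qed

lemma normq_power_q_power: "normq q n ((x::'a) ^ (q ^ j)) = normq q n x"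
proof -
  have "normq q n x ^ q = normq q n x"
    unfolding normq_eq_power_geometric_sum[OF q_gt1]
    by (rule power_geometric_sum_fixed[OF q_gt1 power_q_2n_eq_self])
  hence "normq q n x ^ (q ^ j) = normq q n x"
    by (rule power_power_eq_self)
  thus ?thesis
    unfolding normq_def by (simp only: power_mult[symmetric] mult.commute)
qed

lemma normq_eq_0_iff: "normq q n (x::'a) = 0 \<longleftrightarrow> x = 0"
proof -
  have "0 < (\<Sum>i<2 * n. q ^ i)"
    using n_pos by (intro sum_pos2[of _ 0]) auto
  thus ?thesis
    by (simp add: normq_eq_power_geometric_sum[OF q_gt1])
qed

lemma normq_subfield_el_eq_square:
  assumes "(a::'a) \<in> subfield_el (q ^ n)"
  shows "\<exists>y. y ^ q = y \<and> normq q n a = y ^ 2"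
proof (intro exI conjI)
  let ?S = "\<Sum>i<n. q ^ i"
  have a: "a ^ (q ^ n) = a"
    using assms by (simp add: subfield_el_def)
  show "(a ^ ?S) ^ q = a ^ ?S"
    by (rule power_geometric_sum_fixed[OF q_gt1 a])
  have "normq q n a = a ^ (q ^ n * ?S + ?S)"
    unfolding normq_eq_power_geometric_sum[OF q_gt1] geometric_sum_double[OF q_gt1]
    by (simp add: algebra_simps)
  also have "\<dots> = (a ^ (q ^ n)) ^ ?S * a ^ ?S"
    by (simp only: power_add power_mult)
  finally show "normq q n a = (a ^ ?S) ^ 2"
    using a by (simp add: power2_eq_square)
qed

lemma lin_indep_over_pair:
  assumes "(v::'a) \<noteq> 0" "w / v \<notin> subfield_el (q ^ 2)"
  shows "lin_indep_over (subfield_el (q ^ 2)) {v, w}"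
  unfolding lin_indep_over_def
proof (intro conjI allI impI ballI)
  fix c :: "'a \<Rightarrow> 'a" and u
  assume c: "\<forall>u\<in>{v, w}. c u \<in> subfield_el (q ^ 2)"
    and sum: "(\<Sum>u\<in>{v, w}. c u * u) = 0" and u: "u \<in> {v, w}"
  have "w \<noteq> v"
    using assms by (auto simp: subfield_el_def)
  hence lin: "c w * w = - (c v * v)"
    using sum by (simp add: eq_neg_iff_add_eq_0 add.commute)
  have "c w = 0"
  proof (rule ccontr)
    assume "c w \<noteq> 0"
    hence "w / v = - (c v / c w)"
      using lin assms(1) by (simp add: field_simps)
    moreover have "- (c v / c w) \<in> subfield_el (q ^ 2)"
      using c by (simp add: subfield_el_uminus subfield_el_divide)
    ultimately show False
      using assms(2) by simp
  qed
  thus "c u = 0"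
    using lin assms(1) u by auto
qed simp

lemma hrank_lt_2_ratio_in_subfield:
  fixes f :: "'a \<Rightarrow> 'a"
  assumes "hrank q f < 2" "f x0 \<noteq> 0"
  shows "f x / f x0 \<in> subfield_el (q ^ 2)"
proof (rule ccontr)
  assume not_in: "f x / f x0 \<notin> subfield_el (q ^ 2)"
  hence "f x \<noteq> f x0"
    using assms(2) by (auto simp: subfield_el_def)
  moreover have "card {f x0, f x} \<le> hrank q f"
    using lin_indep_over_pair[OF assms(2) not_in] by (intro card_le_hrank) auto
  ultimately show False
    using assms(1) by simp
qed

lemma hrank_lt_2_normq_coeff_eq:
  assumes "hrank q (lin_poly q n \<beta>) < 2"
    and "even e" "even e'" "e < 2 * n" "e' < 2 * n"
  shows "normq q n (\<beta> e :: 'a) = normq q n (\<beta> e')"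
proof (cases "\<exists>x0. lin_poly q n \<beta> x0 \<noteq> 0")
  case False
  hence "\<And>x. lin_poly q n \<beta> x = lin_poly q n (\<lambda>_. 0) x"
    by (simp add: lin_poly_def)
  hence "\<beta> e = 0" "\<beta> e' = 0"
    using lin_poly_coeff_unique assms(4,5) by blast+
  thus ?thesis
    by simp
next
  case True
  then obtain x0 where x0: "lin_poly q n \<beta> x0 \<noteq> 0"
    by blast
  define v where "v = lin_poly q n \<beta> x0"
  define \<beta>' where "\<beta>' e = \<beta> e / v" for e
  have "lin_poly q n \<beta>' x = lin_poly q n \<beta> x / v" for x
    by (simp add: lin_poly_def \<beta>'_def sum_divide_distrib)
  hence "lin_poly q n \<beta>' x ^ (q ^ 2) = lin_poly q n \<beta>' x" for x
    using hrank_lt_2_ratio_in_subfield[OF assms(1) x0] by (simp add: v_def subfield_el_def)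
  then obtain t where "\<beta>' e' = \<beta>' e ^ (q ^ (2 * t))"
    using lin_poly_fixed_coeff_even assms(2-5) by metis
  hence "normq q n (\<beta>' e') = normq q n (\<beta>' e)"
    by (simp add: normq_power_q_power)
  moreover have "\<beta> e = v * \<beta>' e" for e
    using x0 by (simp add: \<beta>'_def v_def)
  ultimately show ?thesis
    by (metis normq_mult)
qed

lemma eq_0_of_normq_eq_mult_nonsquare:
  assumes nonsq: "\<not> (\<exists>y::'a. y ^ q = y \<and> y ^ 2 = normq q n \<gamma>)"
    and a: "a \<in> subfield_el (q ^ n)" and b: "b \<in> subfield_el (q ^ n)"
    and norms: "normq q n b = normq q n (a * \<gamma>)"
  shows "a = 0"
proof (rule ccontr)
  assume "a \<noteq> 0"
  obtain ya yb where ya: "ya ^ q = ya" "normq q n a = ya ^ 2" and yb: "yb ^ q = yb" "normq q n b = yb ^ 2"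
    using normq_subfield_el_eq_square[OF a] normq_subfield_el_eq_square[OF b] by blast
  have "yb ^ 2 = ya ^ 2 * normq q n \<gamma>"
    using norms unfolding normq_mult ya(2) yb(2) .
  moreover have "ya ^ 2 \<noteq> 0"
    using \<open>a \<noteq> 0\<close> ya(2) normq_eq_0_iff by metis
  ultimately have "(yb / ya) ^ 2 = normq q n \<gamma>"
    by (simp add: power_divide)
  moreover have "(yb / ya) ^ q = yb / ya"
    using ya yb by (simp add: power_divide)
  ultimately show False
    using nonsq by blast
qed

end

section \<open>The code\<close>

definition frob_exp :: "nat \<Rightarrow> int \<Rightarrow> nat \<Rightarrow> nat" where
  "frob_exp n s j = nat ((2 * s * int j) mod (2 * int n))"

lemma frob_eq_power_frob_exp: "frob q n (2 * s * int j) x = x ^ (q ^ frob_exp n s j)"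
  unfolding frob_def frob_exp_def ..

lemma frob_exp_less: "0 < n \<Longrightarrow> frob_exp n s j < 2 * n"
  unfolding frob_exp_def by (simp add: nat_less_iff)

lemma int_frob_exp: "0 < n \<Longrightarrow> int (frob_exp n s j) = (2 * s * int j) mod (2 * int n)"
  unfolding frob_exp_def by simp

lemma even_frob_exp: "0 < n \<Longrightarrow> even (frob_exp n s j)"
  unfolding frob_exp_def by (simp add: even_nat_iff)

lemma frob_exp_inj_on:
  assumes "gcd s (2 * int n) = 1"
  shows "inj_on (frob_exp n s) {1..n}"
proof (rule inj_onI)
  fix j j' assume j: "j \<in> {1..n}" and j': "j' \<in> {1..n}" and eq: "frob_exp n s j = frob_exp n s j'"
  have "0 < n"
    using j by simp
  hence "(2 * s * int j) mod (2 * int n) = (2 * s * int j') mod (2 * int n)"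
    using eq by (metis int_frob_exp)
  hence "2 * int n dvd 2 * s * int j - 2 * s * int j'"
    by (simp only: mod_eq_dvd_iff)
  also have "2 * s * int j - 2 * s * int j' = 2 * (s * (int j - int j'))"
    by (simp add: algebra_simps)
  finally have "int n dvd s * (int j - int j')"
    by simp
  moreover have "coprime (int n) s"
    using assms by (simp add: coprime_iff_gcd_eq_1[symmetric] ac_simps)
  ultimately have "int n dvd int j - int j'"
    by (simp add: coprime_dvd_mult_right_iff)
  moreover have "\<bar>int j - int j'\<bar> < int n"
    using j j' by auto
  ultimately show "j = j'"
    using dvd_imp_le_int[of "int j - int j'" "int n"] by fastforce
qed

(* The terms of Htilde indexed by j with monomial x^(q^(2sj)); the conjugate of c_i sits at
   j = n + 1 - i. *)
definition code_coeff :: "nat \<Rightarrow> nat \<Rightarrow> int \<Rightarrow> 'a::field \<Rightarrow> 'a \<Rightarrow> 'a \<Rightarrow> (nat \<Rightarrow> 'a) \<Rightarrow> nat \<Rightarrow> 'a" where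
  "code_coeff q n s \<gamma> a b c j =
    (if j \<le> (n - 3) div 2 then c j
     else if j = (n - 3) div 2 + 1 then a * \<gamma>
     else if j = (n - 3) div 2 + 2 then b
     else if j = (n - 3) div 2 + 3 then frob q n (s * (int n + 2)) (a * \<gamma>)
     else frob q n (s * (2 * int n - 2 * int (n + 1 - j) + 1)) (c (n + 1 - j)))"

definition code_poly :: "nat \<Rightarrow> nat \<Rightarrow> int \<Rightarrow> 'a::field \<Rightarrow> 'a \<Rightarrow> 'a \<Rightarrow> (nat \<Rightarrow> 'a) \<Rightarrow> 'a \<Rightarrow> 'a" where
  "code_poly q n s \<gamma> a b c x = (\<Sum>j\<in>{1..n}. code_coeff q n s \<gamma> a b c j * x ^ (q ^ frob_exp n s j))"

definition code_lin_coeff :: "nat \<Rightarrow> nat \<Rightarrow> int \<Rightarrow> 'a::field \<Rightarrow> 'a \<Rightarrow> 'a \<Rightarrow> (nat \<Rightarrow> 'a) \<Rightarrow> nat \<Rightarrow> 'a" where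
  "code_lin_coeff q n s \<gamma> a b c e = (\<Sum>j | j \<in> {1..n} \<and> frob_exp n s j = e. code_coeff q n s \<gamma> a b c j)"

definition code_params :: "nat \<Rightarrow> nat \<Rightarrow> ('a::field \<times> 'a \<times> (nat \<Rightarrow> 'a)) set" where
  "code_params q n = subfield_el (q ^ n) \<times> subfield_el (q ^ n) \<times> PiE {1..(n - 3) div 2} (\<lambda>_. UNIV)"

lemma code_coeff_eq:
  assumes "n = 2 * m + 3"
  shows "code_coeff q n s \<gamma> a b c (m + 1) = a * \<gamma>"
    and "code_coeff q n s \<gamma> a b c (m + 2) = b"
    and "code_coeff q n s \<gamma> a b c (m + 3) = frob q n (s * (int n + 2)) (a * \<gamma>)"
    and "i \<in> {1..m} \<Longrightarrow> code_coeff q n s \<gamma> a b c i = c i"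
    and "i \<in> {1..m} \<Longrightarrow>
      code_coeff q n s \<gamma> a b c (n + 1 - i) = frob q n (s * (2 * int n - 2 * int i + 1)) (c i)"
  using assms by (auto simp: code_coeff_def)

lemma sum_reflect_around_middle:
  fixes g :: "nat \<Rightarrow> 'b::comm_monoid_add"
  assumes "n = 2 * m + 3"
  shows "(\<Sum>j\<in>{1..n}. g j) = g (m + 1) + g (m + 2) + g (m + 3) + (\<Sum>i\<in>{1..m}. g i + g (n + 1 - i))"
proof -
  let ?r = "\<lambda>i. n + 1 - i"
  have split: "{1..n} = {m + 1, m + 2, m + 3} \<union> ({1..m} \<union> ?r ` {1..m})"
  proof (intro equalityI subsetI)
    fix j assume j: "j \<in> {1..n}"
    show "j \<in> {m + 1, m + 2, m + 3} \<union> ({1..m} \<union> ?r ` {1..m})"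
    proof (cases "j \<le> m + 3")
      case False
      hence "j = ?r (?r j)" "?r j \<in> {1..m}"
        using j assms by auto
      thus ?thesis
        by blast
    qed (use j in auto)
  qed (use assms in auto)
  have "(\<Sum>j\<in>{1..n}. g j) = (\<Sum>j\<in>{m + 1, m + 2, m + 3}. g j) + ((\<Sum>j\<in>{1..m}. g j) + (\<Sum>j\<in>?r ` {1..m}. g j))"
    unfolding split using assms by (subst sum.union_disjoint, auto)+
  also have "(\<Sum>j\<in>?r ` {1..m}. g j) = (\<Sum>i\<in>{1..m}. g (?r i))"
    using assms by (intro sum.reindex_bij_witness[of _ ?r ?r]) auto
  finally show ?thesis
    by (simp add: sum.distrib add.assoc)
qed

lemma code_poly_eq_lin_poly:
  assumes "0 < n"
  shows "code_poly q n s \<gamma> a b c = lin_poly q n (code_lin_coeff q n s \<gamma> a b c)"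
proof
  fix x
  have "lin_poly q n (code_lin_coeff q n s \<gamma> a b c) x
      = (\<Sum>e<2 * n. \<Sum>j | j \<in> {1..n} \<and> frob_exp n s j = e.
           code_coeff q n s \<gamma> a b c j * x ^ (q ^ frob_exp n s j))"
    unfolding lin_poly_def code_lin_coeff_def sum_distrib_right by simp
  also have "\<dots> = code_poly q n s \<gamma> a b c x"
    unfolding code_poly_def using frob_exp_less[OF assms] by (intro sum.group) auto
  finally show "code_poly q n s \<gamma> a b c x = lin_poly q n (code_lin_coeff q n s \<gamma> a b c) x" ..
qed

lemma code_lin_coeff_frob_exp:
  assumes "gcd s (2 * int n) = 1" "j \<in> {1..n}"
  shows "code_lin_coeff q n s \<gamma> a b c (frob_exp n s j) = code_coeff q n s \<gamma> a b c j"
proof -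
  have "{j' \<in> {1..n}. frob_exp n s j' = frob_exp n s j} = {j}"
    using inj_onD[OF frob_exp_inj_on[OF assms(1)] _ _ assms(2)] assms(2) by blast
  thus ?thesis
    by (simp add: code_lin_coeff_def)
qed

lemma code_poly_zero: "0 < q \<Longrightarrow> code_poly q n s \<gamma> 0 0 (\<lambda>_. 0) = (\<lambda>x. 0::'a::field)"
proof -
  assume "0 < q"
  hence "code_coeff q n s \<gamma> 0 0 (\<lambda>_. 0) j = (0::'a)" for j
    by (simp add: code_coeff_def frob_def)
  thus ?thesis
    by (intro ext) (simp add: code_poly_def)
qed

lemma code_poly_scale:
  assumes "(t::'a::field) ^ q = t"
  shows "code_poly q n s \<gamma> (t * a) (t * b) (\<lambda>i. t * c i) = (\<lambda>x. t * code_poly q n s \<gamma> a b c x)"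
proof -
  have "frob q n k (t * y) = t * frob q n k y" for k y
    using power_power_eq_self[OF assms] by (simp add: frob_def power_mult_distrib)
  hence "code_coeff q n s \<gamma> (t * a) (t * b) (\<lambda>i. t * c i) j = t * code_coeff q n s \<gamma> a b c j" for j
    by (simp add: code_coeff_def mult.assoc)
  thus ?thesis
    by (intro ext) (simp add: code_poly_def sum_distrib_left mult.assoc)
qed

lemma Htilde_term_eq_code_poly:
  assumes n: "n = 2 * m + 3"
  shows "(\<lambda>x. b * frob q n (2 * s * ((int n + 1) div 2)) x
        + a * \<gamma> * frob q n (2 * s * ((int n - 1) div 2)) x
        + frob q n (s * (int n + 2)) (a * \<gamma>) * frob q n (2 * s * ((int n + 3) div 2)) x
        + (\<Sum>i\<in>{1..(n - 3) div 2}.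
             c i * frob q n (2 * s * int i) x
           + frob q n (s * (2 * int n - 2 * int i + 1)) (c i)
               * frob q n (2 * s * (int n - int i + 1)) x)) = code_poly q n s \<gamma> a b c"
    (is "?f = _")
proof
  fix x
  let ?g = "\<lambda>j. code_coeff q n s \<gamma> a b c j * x ^ (q ^ frob_exp n s j)"
  have m: "(n - 3) div 2 = m" and exps: "(int n - 1) div 2 = int (m + 1)"
    "(int n + 1) div 2 = int (m + 2)" "(int n + 3) div 2 = int (m + 3)"
    using n by auto
  have middle: "a * \<gamma> * frob q n (2 * s * ((int n - 1) div 2)) x = ?g (m + 1)"
    "b * frob q n (2 * s * ((int n + 1) div 2)) x = ?g (m + 2)"
    "frob q n (s * (int n + 2)) (a * \<gamma>) * frob q n (2 * s * ((int n + 3) div 2)) x = ?g (m + 3)"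
    unfolding code_coeff_eq(1-3)[OF n] exps frob_eq_power_frob_exp by (rule refl)+
  have pairs: "(\<Sum>i\<in>{1..m}. c i * frob q n (2 * s * int i) x
      + frob q n (s * (2 * int n - 2 * int i + 1)) (c i) * frob q n (2 * s * (int n - int i + 1)) x)
      = (\<Sum>i\<in>{1..m}. ?g i + ?g (n + 1 - i))" (is "sum ?h _ = sum ?k _")
  proof (rule sum.cong[OF refl])
    fix i assume i: "i \<in> {1..m}"
    have reflect: "int n - int i + 1 = int (n + 1 - i)"
      using i n by auto
    show "?h i = ?k i"
      unfolding code_coeff_eq(4,5)[OF n i] reflect frob_eq_power_frob_exp ..
  qed
  show "?f x = code_poly q n s \<gamma> a b c x"
    unfolding code_poly_def sum_reflect_around_middle[OF n] m middle pairs
    by (simp only: ac_simps)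
qed

lemma Htilde_eq_code_poly:
  assumes "n = 2 * m + 3"
  shows "Htilde q n s \<gamma> =
    {code_poly q n s \<gamma> a b c | a b c. a \<in> subfield_el (q ^ n) \<and> b \<in> subfield_el (q ^ n)}"
  unfolding Htilde_def Htilde_term_eq_code_poly[OF assms] ..

locale Htilde_code = frobenius_field q n for q n +
  fixes s :: int and \<gamma> :: "'a::{field,finite}"
  assumes n_odd: "odd n" and n_ge_3: "3 \<le> n" and s_coprime: "gcd s (2 * int n) = 1"
begin

lemma n_eq: "n = 2 * ((n - 3) div 2) + 3"
  using n_odd n_ge_3 by (auto elim!: oddE)

lemma code_coeff_unique:
  assumes "code_poly q n s \<gamma> a b c = code_poly q n s \<gamma> a' b' c'" "j \<in> {1..n}"
  shows "code_coeff q n s \<gamma> a b c j = code_coeff q n s \<gamma> a' b' c' j"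
proof -
  have "lin_poly q n (code_lin_coeff q n s \<gamma> a b c) x = lin_poly q n (code_lin_coeff q n s \<gamma> a' b' c') x" for x
    using assms(1) by (simp add: code_poly_eq_lin_poly[OF n_pos])
  hence "code_lin_coeff q n s \<gamma> a b c (frob_exp n s j) = code_lin_coeff q n s \<gamma> a' b' c' (frob_exp n s j)"
    by (rule lin_poly_coeff_unique[OF _ frob_exp_less[OF n_pos]])
  thus ?thesis
    by (simp add: code_lin_coeff_frob_exp[OF s_coprime assms(2)])
qed

lemma code_poly_add:
  "code_poly q n s \<gamma> (a + a') (b + b') (\<lambda>i. c i + c' i)
    = (\<lambda>x. code_poly q n s \<gamma> a b c x + code_poly q n s \<gamma> a' b' c' x)"
proof -
  have "frob q n k (y + z) = frob q n k y + frob q n k (z::'a)" for k y z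
    by (simp add: frob_def power_q_power_add)
  hence "code_coeff q n s \<gamma> (a + a') (b + b') (\<lambda>i. c i + c' i) j
      = code_coeff q n s \<gamma> a b c j + code_coeff q n s \<gamma> a' b' c' j" for j
    by (simp add: code_coeff_def distrib_right)
  thus ?thesis
    by (intro ext) (simp add: code_poly_def distrib_right sum.distrib)
qed

lemma code_poly_restrict:
  "code_poly q n s \<gamma> a b c = code_poly q n s \<gamma> a b (restrict c {1..(n - 3) div 2})"
proof -
  define m where "m = (n - 3) div 2"
  have "code_coeff q n s \<gamma> a b c j = code_coeff q n s \<gamma> a b (restrict c {1..m}) j"
    if "j \<in> {1..n}" for j
    using that n_eq by (auto simp: code_coeff_def m_def[symmetric])
  thus ?thesis
    unfolding code_poly_def m_def by (intro ext sum.cong) simp_all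
qed

lemma zero_in_Htilde: "(\<lambda>x. 0) \<in> Htilde q n s \<gamma>"
proof -
  have "(\<lambda>x. 0) = code_poly q n s \<gamma> 0 0 (\<lambda>_. 0)"
    using q_gt1 by (intro code_poly_zero[symmetric]) simp
  moreover have "(0::'a) \<in> subfield_el (q ^ n)"
    using q_gt1 by (simp add: subfield_el_def)
  ultimately show ?thesis
    unfolding Htilde_eq_code_poly[OF n_eq] by blast
qed

lemma add_in_Htilde:
  assumes "f \<in> Htilde q n s \<gamma>" "g \<in> Htilde q n s \<gamma>"
  shows "(\<lambda>x. f x + g x) \<in> Htilde q n s \<gamma>"
proof -
  obtain a b c a' b' c' where
    f: "f = code_poly q n s \<gamma> a b c" "a \<in> subfield_el (q ^ n)" "b \<in> subfield_el (q ^ n)" and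
    g: "g = code_poly q n s \<gamma> a' b' c'" "a' \<in> subfield_el (q ^ n)" "b' \<in> subfield_el (q ^ n)"
    using assms unfolding Htilde_eq_code_poly[OF n_eq] by blast
  have "(\<lambda>x. f x + g x) = code_poly q n s \<gamma> (a + a') (b + b') (\<lambda>i. c i + c' i)"
    unfolding f g code_poly_add ..
  moreover have "a + a' \<in> subfield_el (q ^ n)" "b + b' \<in> subfield_el (q ^ n)"
    using f g by (simp_all add: subfield_el_add)
  ultimately show ?thesis
    unfolding Htilde_eq_code_poly[OF n_eq] by blast
qed

lemma scale_in_Htilde:
  assumes "t \<in> subfield_el q" "f \<in> Htilde q n s \<gamma>"
  shows "(\<lambda>x. t * f x) \<in> Htilde q n s \<gamma>"
proof -
  obtain a b c where
    f: "f = code_poly q n s \<gamma> a b c" "a \<in> subfield_el (q ^ n)" "b \<in> subfield_el (q ^ n)"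
    using assms(2) unfolding Htilde_eq_code_poly[OF n_eq] by blast
  have t: "t ^ q = t"
    using assms(1) by (simp add: subfield_el_def)
  have "(\<lambda>x. t * f x) = code_poly q n s \<gamma> (t * a) (t * b) (\<lambda>i. t * c i)"
    unfolding f code_poly_scale[OF t] ..
  moreover have "t * a \<in> subfield_el (q ^ n)" "t * b \<in> subfield_el (q ^ n)"
    using f subfield_el_scale[OF t] by simp_all
  ultimately show ?thesis
    unfolding Htilde_eq_code_poly[OF n_eq] by blast
qed

lemma Htilde_eq_image: "Htilde q n s \<gamma> = (\<lambda>(a, b, c). code_poly q n s \<gamma> a b c) ` code_params q n"
proof (intro equalityI subsetI)
  fix f assume "f \<in> Htilde q n s \<gamma>"
  then obtain a b c where "f = code_poly q n s \<gamma> a b c" "a \<in> subfield_el (q ^ n)" "b \<in> subfield_el (q ^ n)"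
    unfolding Htilde_eq_code_poly[OF n_eq] by blast
  thus "f \<in> (\<lambda>(a, b, c). code_poly q n s \<gamma> a b c) ` code_params q n"
    using code_poly_restrict unfolding code_params_def
    by (intro image_eqI[of _ _ "(a, b, restrict c {1..(n - 3) div 2})"]) auto
qed (auto simp: Htilde_eq_code_poly[OF n_eq] code_params_def)

lemma inj_on_code_poly:
  assumes "\<gamma> \<noteq> 0"
  shows "inj_on (\<lambda>(a, b, c). code_poly q n s \<gamma> a b c) (code_params q n)"
proof (rule inj_onI)
  fix u v
  assume "u \<in> code_params q n" "v \<in> code_params q n"
    "(\<lambda>(a, b, c). code_poly q n s \<gamma> a b c) u = (\<lambda>(a, b, c). code_poly q n s \<gamma> a b c) v"
  then obtain a b c a' b' c' where uv: "u = (a, b, c)" "v = (a', b', c')"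
    and c: "c \<in> PiE {1..(n - 3) div 2} (\<lambda>_. UNIV)" "c' \<in> PiE {1..(n - 3) div 2} (\<lambda>_. UNIV)"
    and eq: "code_poly q n s \<gamma> a b c = code_poly q n s \<gamma> a' b' c'"
    by (auto simp: code_params_def)
  define m where "m = (n - 3) div 2"
  have n: "n = 2 * m + 3"
    using n_eq by (simp add: m_def)
  have coeff: "code_coeff q n s \<gamma> a b c j = code_coeff q n s \<gamma> a' b' c' j" if "j \<in> {1..n}" for j
    using code_coeff_unique[OF eq that] .
  have "a * \<gamma> = a' * \<gamma>" "b = b'"
    using coeff[of "m + 1"] coeff[of "m + 2"] n unfolding code_coeff_eq(1,2)[OF n] by simp_all
  moreover have "c = c'"
  proof (rule PiE_ext[OF c])
    fix i assume i: "i \<in> {1..(n - 3) div 2}"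
    thus "c i = c' i"
      using coeff[of i] n unfolding m_def[symmetric] code_coeff_eq(4)[OF n i[folded m_def]] by simp
  qed
  ultimately show "u = v"
    using assms uv by simp
qed

lemma card_code_params: "card (code_params q n :: ('a \<times> 'a \<times> (nat \<Rightarrow> 'a)) set) = q ^ (n * (n - 1))"
proof -
  have "card (code_params q n :: ('a \<times> 'a \<times> (nat \<Rightarrow> 'a)) set)
      = q ^ n * (q ^ n * (q ^ (2 * n)) ^ ((n - 3) div 2))"
    by (simp add: code_params_def card_cartesian_product card_PiE card_subfield_el card_field)
  also have "\<dots> = q ^ (n * (n - 1))"
  proof -
    define m where "m = (n - 3) div 2"
    have "n * (n - 1) = n + (n + 2 * n * m)"
      using n_eq by (simp add: m_def[symmetric] algebra_simps)
    thus ?thesis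
      unfolding m_def[symmetric] by (simp only: power_add power_mult)
  qed
  finally show ?thesis .
qed

lemma card_Htilde: "\<gamma> \<noteq> 0 \<Longrightarrow> card (Htilde q n s \<gamma>) = q ^ (n * (n - 1))"
  by (simp add: Htilde_eq_image card_image inj_on_code_poly card_code_params)

lemma hrank_lt_2_normq_code_coeff_eq:
  assumes "hrank q (code_poly q n s \<gamma> a b c) < 2" "i \<in> {1..n}" "j \<in> {1..n}"
  shows "normq q n (code_coeff q n s \<gamma> a b c i) = normq q n (code_coeff q n s \<gamma> a b c j)"
proof -
  have "hrank q (lin_poly q n (code_lin_coeff q n s \<gamma> a b c)) < 2"
    using assms(1) by (simp add: code_poly_eq_lin_poly[OF n_pos])
  hence "normq q n (code_lin_coeff q n s \<gamma> a b c (frob_exp n s i))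
      = normq q n (code_lin_coeff q n s \<gamma> a b c (frob_exp n s j))"
    by (rule hrank_lt_2_normq_coeff_eq) (simp_all add: even_frob_exp frob_exp_less n_pos)
  thus ?thesis
    unfolding code_lin_coeff_frob_exp[OF s_coprime assms(2)] code_lin_coeff_frob_exp[OF s_coprime assms(3)] .
qed

lemma hrank_ge_2_of_Htilde:
  assumes nonsq: "\<not> (\<exists>y::'a. y ^ q = y \<and> y ^ 2 = normq q n \<gamma>)"
    and f: "f \<in> Htilde q n s \<gamma>" "f \<noteq> (\<lambda>x. 0)"
  shows "2 \<le> hrank q f"
proof (rule ccontr)
  assume "\<not> 2 \<le> hrank q f"
  define m where "m = (n - 3) div 2"
  have n: "n = 2 * m + 3" and m1: "m + 1 \<in> {1..n}" and m2: "m + 2 \<in> {1..n}"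
    using n_eq by (simp_all add: m_def)
  obtain a b c where f_eq: "f = code_poly q n s \<gamma> a b c"
    and a: "a \<in> subfield_el (q ^ n)" and b: "b \<in> subfield_el (q ^ n)"
    using f(1) unfolding Htilde_eq_code_poly[OF n] by blast
  have same_norm: "normq q n (code_coeff q n s \<gamma> a b c j) = normq q n (a * \<gamma>)" if "j \<in> {1..n}" for j
    using hrank_lt_2_normq_code_coeff_eq[OF _ that m1] \<open>\<not> 2 \<le> hrank q f\<close>
    unfolding f_eq code_coeff_eq(1)[OF n] by simp
  have "a = 0"
    using eq_0_of_normq_eq_mult_nonsquare[OF nonsq a b] same_norm[OF m2]
    unfolding code_coeff_eq(2)[OF n] by blast
  hence "code_coeff q n s \<gamma> a b c j = 0" if "j \<in> {1..n}" for j
    using same_norm[OF that] normq_eq_0_iff by (metis mult_zero_left)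
  hence "f = (\<lambda>x. 0)"
    by (simp add: f_eq code_poly_def fun_eq_iff)
  with f(2) show False ..
qed

end

theorem theorem6p2:
  fixes q n :: nat and s :: int and \<gamma> :: "'a::{field,finite}"
  assumes q_pp: "\<exists>p k. prime p \<and> k > 0 \<and> q = p ^ k"
    and q_odd: "odd q"
    and n_ge: "n \<ge> 3" and n_odd: "odd n"
    and s_cop: "gcd s (2 * int n) = 1"
    and card_field: "CARD('a) = q ^ (2 * n)"
    and nonsq: "\<not> (\<exists>y::'a. y ^ q = y \<and> y ^ 2 = normq q n \<gamma>)"
  shows "(\<lambda>x. 0) \<in> Htilde q n s \<gamma>
    \<and> (\<forall>f\<in>Htilde q n s \<gamma>. \<forall>g\<in>Htilde q n s \<gamma>. (\<lambda>x. f x + g x) \<in> Htilde q n s \<gamma>)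
    \<and> (\<forall>t\<in>subfield_el q. \<forall>f\<in>Htilde q n s \<gamma>. (\<lambda>x. t * f x) \<in> Htilde q n s \<gamma>)
    \<and> card (Htilde q n s \<gamma>) = q ^ (n * (n - 1))
    \<and> (\<forall>f\<in>Htilde q n s \<gamma>. f \<noteq> (\<lambda>x. 0) \<longrightarrow> hrank q f \<ge> 2)"
proof -
  obtain p k where p: "prime p" "0 < k" "q = p ^ k"
    using q_pp by blast
  have q_gt1: "1 < q"
    using p prime_gt_1_nat one_less_power by blast
  have "CHAR('a) = p"
    using p n_ge card_field
    by (intro CHAR_eq_of_card_eq_prime_power[of p "k * (2 * n)"]) (simp_all add: power_mult)
  hence power_q_add: "(x + y) ^ q = x ^ q + y ^ q" for x y :: 'a
    using p by (intro freshmans_dream') simp_all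
  interpret Htilde_code q n s \<gamma>
    using q_gt1 n_ge card_field power_q_add n_odd s_cop by unfold_locales simp_all
  have "\<gamma> \<noteq> 0"
  proof
    assume "\<gamma> = 0"
    hence "(0::'a) ^ q = 0 \<and> 0 ^ 2 = normq q n \<gamma>"
      using q_gt1 normq_eq_0_iff by simp
    thus False
      using nonsq by blast
  qed
  show ?thesis
    using zero_in_Htilde add_in_Htilde scale_in_Htilde card_Htilde[OF \<open>\<gamma> \<noteq> 0\<close>]
      hrank_ge_2_of_Htilde[OF nonsq] by blast
qed

end
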